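(* Let $\kappa$ be a regular cardinal and $\mu$ a singular cardinal. ($\aleph$) Let $\lambda\geq{\rm cf}(\lambda)>\kappa^{++}$. For every family $\mathcal{C}$ of clubs at $\kappa^{++}$ with $|\mathcal{C}|=\lambda$ there is $\mathcal{E}\subseteq\mathcal{C}$ with $|\mathcal{E}|=\lambda$ such that $|\bigcap\mathcal{E}|\geq\kappa$. ($\beth$) Assume $\lambda\geq{\rm cf}(\lambda)>\mu^+$ and that the family $\mathcal{C}$ of clubs at $\mu^+$, $|\mathcal{C}|=\lambda$, witnesses the failure of $\mathrm{Gal}(\mathcal{D}_{\mu^+},\mu^+,\lambda)$. Then for every $\theta<\mu$ there is $\mathcal{E}\subseteq\mathcal{C}$ with $|\mathcal{E}|=\lambda$ such that $|\bigcap\mathcal{E}|\geq\theta$. ($\gimel$) Assume $\kappa$ is a weakly inaccessible cardinal. Then the conclusion of ($\beth$) holds with $\mu$ replaced by $\kappa$: if $\lambda\geq{\rm cf}(\lambda)>\kappa^+$ and the family $\mathcal{C}$ of clubs at $\kappa^+$, $|\mathcal{C}|=\lambda$, witnesses the failure of $\mathrm{Gal}(\mathcal{D}_{\kappa^+},\kappa^+,\lambda)$, then for every $\theta<\kappa$ there is $\mathcal{E}\subseteq\mathcal{C}$ with $|\mathcal{E}|=\lambda$ and $|\bigcap\mathcal{E}|\geq\theta$.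
   Context: For a regular uncountable cardinal $\theta$, $\mathcal{D}_\theta$ denotes the club filter on $\theta$. For a filter $\mathcal{F}$ and cardinals $\mu\leq\lambda$, $\mathrm{Gal}(\mathcal{F},\mu,\lambda)$ is the statement: for every $\mathcal{C}\subseteq\mathcal{F}$ with $|\mathcal{C}|=\lambda$ there is $\mathcal{E}\subseteq\mathcal{C}$ with $|\mathcal{E}|=\mu$ such that $\bigcap\mathcal{E}\in\mathcal{F}$; a family $\mathcal{C}$ witnesses its failure if it is a counterexample to this statement. *)

theory Defs
  imports Main
begin

unbundle cardinal_syntax

text \<open>Cardinals are represented, as in Main's BNF cardinal library, by cardinal-order
relations (well-orders that are initial); an ordinal is a well-order relation.\<close>

definition cf_gt :: "'a rel \<Rightarrow> 'b rel \<Rightarrow> bool" where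
  "cf_gt lam nu \<longleftrightarrow> (\<forall>A. A \<subseteq> Field lam \<and> cofinal A lam \<longrightarrow> nu <o (card_of (A)))"

definition closed_in :: "'a rel \<Rightarrow> 'a set \<Rightarrow> bool" where
  "closed_in r C \<longleftrightarrow>
     (\<forall>a \<in> Field r.
        (\<exists>b. (b, a) \<in> r \<and> b \<noteq> a) \<and>
        (\<forall>b. (b, a) \<in> r \<and> b \<noteq> a \<longrightarrow>
              (\<exists>c \<in> C. (b, c) \<in> r \<and> b \<noteq> c \<and> (c, a) \<in> r \<and> c \<noteq> a))
        \<longrightarrow> a \<in> C)"

definition club :: "'a rel \<Rightarrow> 'a set \<Rightarrow> bool" where
  "club r C \<longleftrightarrow> C \<subseteq> Field r \<and> closed_in r C \<and> cofinal C r"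

definition club_filter :: "'a rel \<Rightarrow> 'a set set" where
  "club_filter r = {X. X \<subseteq> Field r \<and> (\<exists>D. club r D \<and> D \<subseteq> X)}"

definition Gal :: "'a set set \<Rightarrow> 'm rel \<Rightarrow> 'l rel \<Rightarrow> bool" where
  "Gal F mu lam \<longleftrightarrow>
     (\<forall>C. C \<subseteq> F \<and> (card_of (C)) =o lam \<longrightarrow> (\<exists>E. E \<subseteq> C \<and> (card_of (E)) =o mu \<and> \<Inter>E \<in> F))"

definition Gal_fail_witness :: "'a set set \<Rightarrow> 'm rel \<Rightarrow> 'l rel \<Rightarrow> 'a set set \<Rightarrow> bool" where
  "Gal_fail_witness F mu lam C \<longleftrightarrow>
     C \<subseteq> F \<and> (card_of (C)) =o lam \<and> \<not> (\<exists>E. E \<subseteq> C \<and> (card_of (E)) =o mu \<and> \<Inter>E \<in> F)"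

definition regular_cardinal :: "'a rel \<Rightarrow> bool" where
  "regular_cardinal k \<longleftrightarrow> Card_order k \<and> cinfinite k \<and> regularCard k"

definition singular_cardinal :: "'a rel \<Rightarrow> bool" where
  "singular_cardinal k \<longleftrightarrow> Card_order k \<and> cinfinite k \<and> \<not> regularCard k"

definition weakly_inaccessible :: "'a rel \<Rightarrow> bool" where
  "weakly_inaccessible k \<longleftrightarrow> regular_cardinal k \<and> card_of (UNIV :: nat set) <o k \<and>
     (\<forall>nu :: 'a rel. Card_order nu \<and> nu <o k \<longrightarrow> cardSuc nu <o k)"

end

theory Submission
  imports Defs
begin

text \<open>
Let \<open>r\<close> be regular and \<open>k\<close> regular with \<open>k\<^sup>+ < r\<close>. Shelah's club guessing gives a club \<open>E\<close>
such that every club \<open>D\<close> contains the set \<open>guess E d\<close> of suprema of \<open>E\<close> below the rungs of a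
ladder at some point \<open>d\<close> of cofinality \<open>k\<close>; such a set has at least \<open>k\<close> elements. So every
club contains one of at most \<open>r\<close> sets of size \<open>\<ge> k\<close>. Given \<open>\<lambda>\<close> clubs with \<open>cf \<lambda> > r\<close>,
pigeonhole yields \<open>\<lambda>\<close> of them containing the same such set.

For (\<open>\<aleph>\<close>) take \<open>k = \<kappa>\<close>; for (\<open>\<beth>\<close>) and (\<open>\<gimel>\<close>) take \<open>k = (|\<theta>| + \<aleph>\<^sub>0)\<^sup>+\<close>, which is below
\<open>\<mu>\<close> since \<open>\<mu>\<close> is singular, resp. below \<open>\<kappa>\<close> since \<open>\<kappa>\<close> is a limit cardinal. The failure of
Galvin's property is used only through \<open>|C| = \<lambda>\<close>.
\<close>

subsection \<open>Cardinal arithmetic\<close>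

lemma finite_card_of_ordLess:
  assumes "Card_order k" and "infinite (Field k)" and "finite X"
  shows "|X| <o k"
proof (rule finite_ordLess_infinite[OF card_of_Well_order])
  show "Well_order k" "finite (Field |X| )" "infinite (Field k)"
    using assms by (simp_all add: Field_card_of card_order_on_well_order_on)
qed

lemma card_of_insert_ordLess:
  assumes "Card_order k" and "infinite (Field k)" and "|X| <o k"
  shows "|insert x X| <o k"
  using card_of_Un_ordLess_infinite_Field[OF assms(2,1) finite_card_of_ordLess[OF assms(1,2)] assms(3), of "{x}"]
  by simp

lemma card_of_under_ordLess:
  assumes "Card_order k" and "infinite (Field k)" and "|X \<inter> underS k' y| <o k"
  shows "|X \<inter> under k' y| <o k"
proof (rule ordLeq_ordLess_trans[OF card_of_mono1])
  show "X \<inter> under k' y \<subseteq> insert y (X \<inter> underS k' y)"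
    unfolding under_def underS_def by blast
  show "|insert y (X \<inter> underS k' y)| <o k"
    by (rule card_of_insert_ordLess[OF assms])
qed

lemma ordLess_imp_ordLeq_underS:
  assumes "Card_order lam" and "|X| <o lam"
  shows "\<exists>q\<in>Field lam. |X| \<le>o |underS lam q|"
proof -
  have WELL: "Well_order lam"
    using assms(1) by (rule card_order_on_well_order_on)
  obtain q where q: "q \<in> Field lam" "|X| =o Restr lam (underS lam q)"
    using ordLess_iff_ordIso_Restr[OF WELL card_of_Well_order] assms(2) by blast
  have "|Field |X| | \<le>o |Field (Restr lam (underS lam q))|"
    using q(2) ordIso_iff_ordLeq card_of_mono2 by blast
  moreover have "Field (Restr lam (underS lam q)) = underS lam q"
    using Field_Restr_ofilter[OF WELL wo_rel.underS_ofilter] WELL unfolding wo_rel_def by blast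
  ultimately show ?thesis
    using q(1) by (auto simp: Field_card_of)
qed

lemma cf_gt_imp_ordLess:
  assumes "Card_order lam" and "infinite (Field lam)" and "cf_gt lam r"
  shows "r <o lam"
proof -
  have "cofinal (Field lam) lam"
    unfolding cofinal_def using infinite_Card_order_limit[OF assms(1,2)] by blast
  then have "r <o |Field lam|"
    using assms(3) unfolding cf_gt_def by blast
  then show ?thesis
    by (rule ordLess_ordIso_trans[OF _ card_of_Field_ordIso[OF assms(1)]])
qed

lemma cf_gt_imp_bounded:
  assumes lam: "Card_order lam" and cf: "cf_gt lam r"
    and A: "A \<subseteq> Field lam" "|A| \<le>o r"
  shows "\<exists>b\<in>Field lam. \<forall>a\<in>A. (a, b) \<in> lam"
proof -
  have WELL: "wo_rel lam"
    using lam unfolding wo_rel_def by (rule card_order_on_well_order_on)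
  have "\<not> cofinal A lam"
    using cf A not_ordLess_ordLeq unfolding cf_gt_def by blast
  then obtain b where b: "b \<in> Field lam" "\<forall>a\<in>A. \<not> (b \<noteq> a \<and> (b, a) \<in> lam)"
    unfolding cofinal_def by blast
  have "(a, b) \<in> lam" if a: "a \<in> A" for a
  proof (cases "a = b")
    case True
    then show ?thesis
      using wo_rel.REFL[OF WELL] b(1) unfolding refl_on_def by blast
  next
    case False
    then have "(b, a) \<notin> lam"
      using b(2) a by auto
    then show ?thesis
      using wo_rel.TOTALS[OF WELL] b(1) a A(1) by blast
  qed
  then show ?thesis
    using b(1) by blast
qed

lemma cf_gt_imp_uniform_bound:
  assumes lam: "Card_order lam" "infinite (Field lam)" and cf: "cf_gt lam r"
    and I: "|I| \<le>o r" and F: "\<And>i. i \<in> I \<Longrightarrow> |F i| <o lam"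
  shows "\<exists>b\<in>Field lam. \<forall>i\<in>I. |F i| \<le>o |under lam b|"
proof -
  have "\<forall>i\<in>I. \<exists>q\<in>Field lam. |F i| \<le>o |underS lam q|"
    using ordLess_imp_ordLeq_underS[OF lam(1) F] by blast
  then obtain q where q: "\<And>i. i \<in> I \<Longrightarrow> q i \<in> Field lam \<and> |F i| \<le>o |underS lam (q i)|"
    by metis
  have "q ` I \<subseteq> Field lam"
    using q by blast
  from cf_gt_imp_bounded[OF lam(1) cf this ordLeq_transitive[OF card_of_image I]]
  obtain b where b: "b \<in> Field lam" "\<forall>a\<in>q ` I. (a, b) \<in> lam"
    by blast
  have "|F i| \<le>o |under lam b|" if i: "i \<in> I" for i
  proof -
    have "(q i, b) \<in> lam"
      using b(2) i by blast
    then have "underS lam (q i) \<subseteq> under lam b"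
      using card_order_on_well_order_on[OF lam(1)]
      unfolding underS_def under_def well_order_on_def linear_order_on_def partial_order_on_def
        preorder_on_def trans_def by blast
    then show ?thesis
      by (rule ordLeq_transitive[OF conjunct2[OF q[OF i]] card_of_mono1])
  qed
  then show ?thesis
    using b(1) by blast
qed

lemma card_of_UNION_ordLess_cf:
  assumes lam: "Card_order lam" "infinite (Field lam)" and cf: "cf_gt lam r"
    and r: "Card_order r" "infinite (Field r)"
    and I: "|I| \<le>o r" and F: "\<And>i. i \<in> I \<Longrightarrow> |F i| <o lam"
  shows "|\<Union>i\<in>I. F i| <o lam"
proof -
  have "\<exists>b\<in>Field lam. \<forall>i\<in>I. |F i| \<le>o |under lam b|"
    by (rule cf_gt_imp_uniform_bound[OF lam cf I]) (rule F)
  then obtain b where b: "b \<in> Field lam" and F_le: "\<forall>i\<in>I. |F i| \<le>o |under lam b|"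
    by blast
  have "|UNIV \<inter> under lam b| <o lam"
    by (rule card_of_under_ordLess[OF lam]) (simp add: card_of_underS[OF lam(1) b])
  then have "|under lam b| <o lam"
    by simp
  moreover have "|Field r| <o lam"
    by (rule ordIso_ordLess_trans[OF card_of_Field_ordIso[OF r(1)] cf_gt_imp_ordLess[OF lam cf]])
  ultimately have "|Field r <+> under lam b| <o lam"
    by (intro card_of_Plus_ordLess_infinite_Field[OF lam(2,1)])
  moreover have "|\<Union>i\<in>I. F i| \<le>o |Field r <+> under lam b|"
  proof (rule card_of_UNION_ordLeq_infinite)
    show "infinite (Field r <+> under lam b)"
      using r(2) by simp
    have "|I| \<le>o |Field r|"
      by (rule ordLeq_ordIso_trans[OF I ordIso_symmetric[OF card_of_Field_ordIso[OF r(1)]]])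
    then show "|I| \<le>o |Field r <+> under lam b|"
      by (rule ordLeq_transitive[OF _ card_of_Plus1])
    show "\<forall>i\<in>I. |F i| \<le>o |Field r <+> under lam b|"
      using ordLeq_transitive[OF _ card_of_Plus2] F_le by blast
  qed
  ultimately show ?thesis
    by (rule ordLeq_ordLess_trans[rotated])
qed

lemma exists_large_fiber:
  assumes lam: "Card_order lam" "infinite (Field lam)" and cf: "cf_gt lam r"
    and r: "Card_order r" "infinite (Field r)"
    and C: "|C| =o lam" and g: "g ` C \<subseteq> Field r"
  shows "\<exists>x\<in>Field r. |{D\<in>C. g D = x}| =o lam"
proof (rule ccontr)
  assume no_large: "\<not> ?thesis"
  have "|{D\<in>C. g D = x}| <o lam" if "x \<in> Field r" for x
  proof -
    have "|{D\<in>C. g D = x}| \<le>o lam"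
      by (rule ordLeq_ordIso_trans[OF card_of_mono1 C]) blast
    then show ?thesis
      using no_large that ordLeq_iff_ordLess_or_ordIso by blast
  qed
  then have "|\<Union>x\<in>Field r. {D\<in>C. g D = x}| <o lam"
    by (rule card_of_UNION_ordLess_cf[OF lam cf r ordIso_imp_ordLeq[OF card_of_Field_ordIso[OF r(1)]]])
  moreover have "C = (\<Union>x\<in>Field r. {D\<in>C. g D = x})"
    using g by blast
  ultimately show False
    using C not_ordLess_ordIso by auto
qed

subsection \<open>Clubs of a regular uncountable cardinal\<close>

locale regular_uncountable =
  fixes r :: "'a rel"
  assumes card_order: "Card_order r"
    and regular: "regularCard r"
    and uncountable: "|UNIV :: nat set| <o r"
begin

sublocale wo_rel r
  using card_order unfolding card_order_on_def wo_rel_def by blast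

abbreviation r_le (infix "\<preceq>" 50) where "a \<preceq> b \<equiv> (a, b) \<in> r"
abbreviation r_less (infix "\<prec>" 50) where "a \<prec> b \<equiv> (a, b) \<in> r \<and> a \<noteq> b"

lemma r_le_refl: "a \<in> Field r \<Longrightarrow> a \<preceq> a"
  using REFL unfolding refl_on_def by blast

lemma r_le_trans: "a \<preceq> b \<Longrightarrow> b \<preceq> c \<Longrightarrow> a \<preceq> c"
  using TRANS unfolding trans_def by blast

lemma r_le_antisym: "a \<preceq> b \<Longrightarrow> b \<preceq> a \<Longrightarrow> a = b"
  using ANTISYM unfolding antisym_def by blast

lemma r_less_le_trans: "a \<prec> b \<Longrightarrow> b \<preceq> c \<Longrightarrow> a \<prec> c"
  using r_le_trans r_le_antisym by blast

lemma r_le_less_trans: "a \<preceq> b \<Longrightarrow> b \<prec> c \<Longrightarrow> a \<prec> c"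
  using r_le_trans r_le_antisym by blast

lemma r_not_le_less: "a \<in> Field r \<Longrightarrow> b \<in> Field r \<Longrightarrow> \<not> a \<preceq> b \<Longrightarrow> b \<prec> a"
  using TOTALS r_le_refl by blast

lemma infinite_Field: "infinite (Field r)"
proof -
  have "|UNIV :: nat set| \<le>o |Field r|"
    using uncountable card_of_Field_ordIso[OF card_order]
    by (blast intro: ordLess_imp_ordLeq ordLess_ordIso_trans ordIso_symmetric)
  then show ?thesis
    using card_of_ordLeq_infinite infinite_UNIV_nat by blast
qed

lemma exists_greater: "a \<in> Field r \<Longrightarrow> \<exists>b. a \<prec> b"
  using infinite_Card_order_limit[OF card_order infinite_Field] by blast

lemma small_set_strictly_bounded:
  assumes "X \<subseteq> Field r" and "|X| <o r"
  shows "\<exists>u\<in>Field r. \<forall>x\<in>X. x \<prec> u"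
proof -
  have "\<not> cofinal X r"
    using regular assms not_ordLess_ordIso unfolding regularCard_def by blast
  then obtain u where u: "u \<in> Field r" "\<forall>x\<in>X. x \<preceq> u"
    unfolding cofinal_def using assms(1) r_not_le_less by blast
  obtain v where "u \<prec> v"
    using exists_greater u(1) by blast
  then show ?thesis
    using u r_le_less_trans by (blast intro: FieldI2)
qed

lemma card_of_club: "club r D \<Longrightarrow> |D| =o r"
  using regular unfolding club_def regularCard_def by blast

lemma Above_subset_Field: "Above X \<subseteq> Field r"
  unfolding Above_def by blast

lemma Above_Int_underS: "a \<in> Field r \<Longrightarrow> a \<in> Above (X \<inter> underS a)"
  unfolding Above_def underS_def by blast

lemma supr_upper: "Above X \<noteq> {} \<Longrightarrow> x \<in> X \<Longrightarrow> x \<preceq> supr X"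
  unfolding supr_def using minim_in[of "Above X"] Above_subset_Field by (fastforce simp: Above_def)

lemma supr_least: "u \<in> Above X \<Longrightarrow> supr X \<preceq> u"
  unfolding supr_def using minim_least Above_subset_Field by blast

lemma supr_in_Field: "Above X \<noteq> {} \<Longrightarrow> supr X \<in> Field r"
  unfolding supr_def using minim_inField Above_subset_Field by blast

lemma supr_mono:
  assumes "Above Y \<noteq> {}" and "X \<subseteq> Y"
  shows "supr X \<preceq> supr Y"
proof (rule supr_least)
  show "supr Y \<in> Above X"
    using assms supr_in_Field supr_upper unfolding Above_def by blast
qed

lemma less_supr_imp_ex_less:
  assumes "Above X \<noteq> {}" and "b \<prec> supr X"
  shows "\<exists>x\<in>X. b \<prec> x"
proof (rule ccontr)
  assume "\<not> ?thesis"
  then have "b \<in> Above X"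
    using assms r_not_le_less supr_upper unfolding Above_def by (blast intro: FieldI1 FieldI2)
  then show False
    using assms(2) supr_least r_le_antisym by blast
qed

definition limit_points :: "'a set \<Rightarrow> 'a set" where
  "limit_points E = {a \<in> Field r. (\<exists>b. b \<prec> a) \<and> (\<forall>b. b \<prec> a \<longrightarrow> (\<exists>c\<in>E. b \<prec> c \<and> c \<prec> a))}"

lemma closed_in_iff_limit_points: "closed_in r D \<longleftrightarrow> limit_points D \<subseteq> D"
  unfolding closed_in_def limit_points_def by blast

lemma limit_points_mono: "E \<subseteq> E' \<Longrightarrow> limit_points E \<subseteq> limit_points E'"
  unfolding limit_points_def by blast

lemma supr_in_limit_points:
  assumes "Y \<noteq> {}" and bounded: "Above Y \<noteq> {}" and "supr Y \<notin> Y"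
    and interleaved: "\<And>y. y \<in> Y \<Longrightarrow> \<exists>d\<in>D. y \<preceq> d \<and> d \<prec> supr Y"
  shows "supr Y \<in> limit_points D"
proof -
  have below: "y \<prec> supr Y" if "y \<in> Y" for y
    using supr_upper[OF bounded that] that assms(3) by blast
  have "\<exists>d\<in>D. b \<prec> d \<and> d \<prec> supr Y" if "b \<prec> supr Y" for b
    using less_supr_imp_ex_less[OF bounded that] interleaved r_less_le_trans by blast
  then show ?thesis
    unfolding limit_points_def using supr_in_Field[OF bounded] below assms(1) by blast
qed

lemma closed_supr_mem:
  assumes "closed_in r D" and "Y \<subseteq> D" and "Y \<noteq> {}" and "Above Y \<noteq> {}"
  shows "supr Y \<in> D"
proof (cases "supr Y \<in> Y")
  case False
  have "\<exists>d\<in>D. y \<preceq> d \<and> d \<prec> supr Y" if y: "y \<in> Y" for y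
  proof -
    have "y \<prec> supr Y"
      using supr_upper[OF assms(4) y] y False by blast
    then show ?thesis
      using y assms(2) r_le_refl by (blast intro: FieldI1)
  qed
  then have "supr Y \<in> limit_points D"
    by (rule supr_in_limit_points[OF assms(3,4) False])
  then show ?thesis
    using assms(1) unfolding closed_in_iff_limit_points by blast
qed (use assms(2) in blast)

lemma exists_above_in_each_club:
  assumes clubs: "\<forall>D\<in>F. club r D" and small: "|F| <o r" and x: "x \<in> Field r"
  shows "\<exists>y. x \<prec> y \<and> (\<forall>D\<in>F. \<exists>d\<in>D. x \<prec> d \<and> d \<preceq> y)"
proof -
  have "\<exists>d\<in>D. x \<prec> d" if "D \<in> F" for D
    using clubs that x unfolding club_def cofinal_def by blast
  then obtain f where f: "\<And>D. D \<in> F \<Longrightarrow> f D \<in> D \<and> x \<prec> f D"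
    by metis
  have "insert x (f ` F) \<subseteq> Field r"
    using f x by (auto intro: FieldI2)
  moreover have "|insert x (f ` F)| <o r"
    by (rule card_of_insert_ordLess[OF card_order infinite_Field ordLeq_ordLess_trans[OF card_of_image small]])
  ultimately obtain u where "\<forall>z\<in>insert x (f ` F). z \<prec> u"
    using small_set_strictly_bounded by blast
  then show ?thesis
    using f by blast
qed

text \<open>An \<open>\<omega>\<close>-sequence that passes through every club of \<open>F\<close> between consecutive terms has its
  supremum in all of them; here \<open>r > \<aleph>\<^sub>0\<close> is used.\<close>

lemma cofinal_Inter_clubs:
  assumes clubs: "\<forall>D\<in>F. club r D" and small: "|F| <o r" and a: "a \<in> Field r"
  shows "\<exists>b\<in>\<Inter>F. a \<prec> b"
proof -
  have "\<forall>x\<in>Field r. \<exists>y. x \<prec> y \<and> (\<forall>D\<in>F. \<exists>d\<in>D. x \<prec> d \<and> d \<preceq> y)"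
    using exists_above_in_each_club[OF clubs small] by blast
  then obtain nxt where nxt: "\<And>x. x \<in> Field r \<Longrightarrow> x \<prec> nxt x \<and> (\<forall>D\<in>F. \<exists>d\<in>D. x \<prec> d \<and> d \<preceq> nxt x)"
    by (metis bchoice)
  define s where "s n = (nxt ^^ n) a" for n
  have s_Field: "s n \<in> Field r" for n
    by (induction n) (use a nxt in \<open>auto simp: s_def intro: FieldI2\<close>)
  have s_Suc: "s (Suc n) = nxt (s n)" for n
    by (simp add: s_def)
  have "|range s| <o r"
    using ordLeq_ordLess_trans[OF card_of_image uncountable] .
  then have bounded: "Above (range s) \<noteq> {}"
    using small_set_strictly_bounded[of "range s"] s_Field unfolding Above_def by blast
  have s_less: "s n \<prec> supr (range s)" for n
  proof (rule r_less_le_trans)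
    show "s n \<prec> s (Suc n)"
      using nxt[OF s_Field] s_Suc by simp
    show "s (Suc n) \<preceq> supr (range s)"
      by (rule supr_upper[OF bounded]) simp
  qed
  have "supr (range s) \<in> limit_points D" if D: "D \<in> F" for D
  proof (rule supr_in_limit_points[OF _ bounded])
    show "range s \<noteq> {}"
      by blast
    show "supr (range s) \<notin> range s"
      using s_less by (metis imageE)
    fix y assume "y \<in> range s"
    then obtain n where n: "y = s n"
      by blast
    obtain d where "d \<in> D" "s n \<prec> d" "d \<preceq> s (Suc n)"
      using nxt[OF s_Field[of n]] D unfolding s_Suc by blast
    then show "\<exists>d\<in>D. y \<preceq> d \<and> d \<prec> supr (range s)"
      using n s_less r_le_less_trans by blast
  qed
  then have "supr (range s) \<in> \<Inter>F"
    using clubs closed_in_iff_limit_points unfolding club_def by blast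
  then show ?thesis
    using s_less[of 0] by (auto simp: s_def)
qed

lemma club_Inter:
  assumes "\<forall>D\<in>F. club r D" and "|F| <o r"
  shows "club r (Field r \<inter> \<Inter>F)"
proof -
  have "limit_points (Field r \<inter> \<Inter>F) \<subseteq> Field r \<inter> \<Inter>F"
  proof
    fix a assume a: "a \<in> limit_points (Field r \<inter> \<Inter>F)"
    have "a \<in> D" if "D \<in> F" for D
    proof -
      have "a \<in> limit_points D"
        using a limit_points_mono[of "Field r \<inter> \<Inter>F" D] that by blast
      then show ?thesis
        using assms(1) that unfolding club_def closed_in_iff_limit_points by blast
    qed
    then show "a \<in> Field r \<inter> \<Inter>F"
      using a unfolding limit_points_def by blast
  qed
  then have "closed_in r (Field r \<inter> \<Inter>F)"
    unfolding closed_in_iff_limit_points .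
  moreover have "cofinal (Field r \<inter> \<Inter>F) r"
    using cofinal_Inter_clubs[OF assms] unfolding cofinal_def by (blast intro: FieldI2)
  ultimately show ?thesis
    unfolding club_def by blast
qed

lemma club_Int:
  assumes "club r D" and "club r D'"
  shows "club r (D \<inter> D')"
proof -
  have "club r (Field r \<inter> \<Inter>{D, D'})"
    using assms by (intro club_Inter finite_card_of_ordLess[OF card_order infinite_Field]) auto
  moreover have "Field r \<inter> \<Inter>{D, D'} = D \<inter> D'"
    using assms unfolding club_def by blast
  ultimately show ?thesis
    by simp
qed

lemma card_of_Inter_finite_clubs:
  assumes "finite C" and "\<forall>D\<in>C. club r D"
  shows "r \<le>o |\<Inter>C|"
proof -
  have "club r (Field r \<inter> \<Inter>C)"
    using club_Inter assms finite_card_of_ordLess[OF card_order infinite_Field] by blast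
  then have "r \<le>o |Field r \<inter> \<Inter>C|"
    using card_of_club ordIso_iff_ordLeq ordIso_symmetric by blast
  then show ?thesis
    by (rule ordLeq_transitive[OF _ card_of_mono1]) blast
qed

definition strictly_directed :: "'b rel \<Rightarrow> 'a set \<Rightarrow> bool" where
  "strictly_directed \<kappa> Y \<longleftrightarrow> (\<forall>Z \<subseteq> Y. |Z| <o \<kappa> \<longrightarrow> (\<exists>y\<in>Y. \<forall>z\<in>Z. z \<prec> y))"

lemma strictly_directedD:
  "strictly_directed \<kappa> Y \<Longrightarrow> Z \<subseteq> Y \<Longrightarrow> |Z| <o \<kappa> \<Longrightarrow> \<exists>y\<in>Y. \<forall>z\<in>Z. z \<prec> y"
  unfolding strictly_directed_def by blast

lemma strictly_directed_finite:
  assumes "strictly_directed \<kappa> Y" and "Card_order \<kappa>" and "infinite (Field \<kappa>)"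
    and "Z \<subseteq> Y" and "finite Z"
  shows "\<exists>y\<in>Y. \<forall>z\<in>Z. z \<prec> y"
  by (rule strictly_directedD[OF assms(1,4) finite_card_of_ordLess[OF assms(2,3,5)]])

end

subsection \<open>Club guessing\<close>

locale club_guessing_setup = regular_uncountable r for r :: "'a rel" +
  fixes k :: "'k rel"
  assumes k_card_order: "Card_order k"
    and k_infinite: "infinite (Field k)"
    and k_regular: "regularCard k"
    and cardSuc_k_less: "cardSuc k <o r"
begin

lemma k_less: "k <o r"
  using ordLess_transitive[OF cardSuc_greater[OF k_card_order] cardSuc_k_less] .

lemma k_Cinfinite: "Cinfinite k"
  using k_card_order k_infinite unfolding cinfinite_def by blast

lemma cardSuc_k_infinite: "infinite (Field (cardSuc k))"
  using Cinfinite_cardSuc[OF k_Cinfinite] unfolding cinfinite_def by blast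

lemma not_ordLeq_k_imp_ordLess: "\<not> k \<le>o |Z| \<Longrightarrow> |Z| <o k"
  using ordLess_or_ordLeq[OF card_of_Well_order card_order_on_well_order_on[OF k_card_order]] by blast

definition unbounded_below :: "'a \<Rightarrow> 'a set \<Rightarrow> bool" where
  "unbounded_below d Z \<longleftrightarrow> (\<forall>b. b \<prec> d \<longrightarrow> (\<exists>z\<in>Z. b \<prec> z))"

text \<open>The points of cofinality \<open>k\<close> (the stationary set \<open>S\<^sup>r\<^sub>k\<close>), with cofinality expressed through
  unbounded subsets of the initial segment.\<close>

definition cof_k_points :: "'a set" where
  "cof_k_points = {d \<in> Field r.
     (\<exists>L \<subseteq> underS d. |L| \<le>o k \<and> unbounded_below d L) \<and>
     (\<forall>Z \<subseteq> underS d. unbounded_below d Z \<longrightarrow> k \<le>o |Z| )}"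

lemma large_if_unbounded_below:
  "d \<in> cof_k_points \<Longrightarrow> Z \<subseteq> underS d \<Longrightarrow> unbounded_below d Z \<Longrightarrow> k \<le>o |Z|"
  unfolding cof_k_points_def by blast

lemma unbounded_below_supr:
  assumes "Above Y \<noteq> {}" and "\<forall>y\<in>Y. \<exists>l\<in>L. y \<preceq> l"
  shows "unbounded_below (supr Y) L"
  unfolding unbounded_below_def
proof (intro allI impI)
  fix b assume "b \<prec> supr Y"
  then obtain y where "y \<in> Y" "b \<prec> y"
    using less_supr_imp_ex_less[OF assms(1)] by blast
  then show "\<exists>l\<in>L. b \<prec> l"
    using assms(2) r_less_le_trans by blast
qed

lemma large_if_unbounded_below_supr:
  assumes directed: "strictly_directed k Y" and bounded: "Above Y \<noteq> {}"
    and below: "\<forall>y\<in>Y. y \<prec> supr Y"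
    and Z: "Z \<subseteq> underS (supr Y)" "unbounded_below (supr Y) Z"
  shows "k \<le>o |Z|"
proof (rule ccontr)
  assume "\<not> k \<le>o |Z|"
  then have Z_small: "|Z| <o k"
    by (rule not_ordLeq_k_imp_ordLess)
  have "\<forall>z\<in>Z. \<exists>y\<in>Y. z \<prec> y"
    using Z(1) less_supr_imp_ex_less[OF bounded] unfolding underS_def by blast
  then obtain g where g: "\<And>z. z \<in> Z \<Longrightarrow> g z \<in> Y \<and> z \<prec> g z"
    by metis
  have "g ` Z \<subseteq> Y"
    using g by blast
  from strictly_directedD[OF directed this ordLeq_ordLess_trans[OF card_of_image Z_small]]
  obtain y where y: "y \<in> Y" "\<forall>z\<in>Z. g z \<prec> y"
    by blast
  then obtain z where "z \<in> Z" "y \<prec> z"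
    using Z(2) below unfolding unbounded_below_def by blast
  then show False
    using g y r_less_le_trans r_le_antisym by blast
qed

lemma supr_in_cof_k_points:
  assumes Y: "Y \<subseteq> Field r" and directed: "strictly_directed k Y"
    and L: "L \<subseteq> Y" "|L| \<le>o k" "\<forall>y\<in>Y. \<exists>l\<in>L. y \<preceq> l"
  shows "supr Y \<in> cof_k_points \<inter> limit_points Y"
proof -
  obtain u where u: "u \<in> Field r" "\<forall>l\<in>L. l \<prec> u"
    using small_set_strictly_bounded[OF _ ordLeq_ordLess_trans[OF L(2) k_less]] L(1) Y by blast
  have "y \<preceq> u" if y: "y \<in> Y" for y
  proof -
    obtain l where "l \<in> L" "y \<preceq> l"
      using L(3) y by blast
    then show ?thesis
      using u(2) r_le_trans by blast
  qed
  then have bounded: "Above Y \<noteq> {}"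
    using u(1) unfolding Above_def by blast
  have below: "y \<prec> supr Y" if y: "y \<in> Y" for y
  proof -
    obtain y' where "y' \<in> Y" "y \<prec> y'"
      using strictly_directed_finite[OF directed k_card_order k_infinite, of "{y}"] y by blast
    then show ?thesis
      using supr_upper[OF bounded] r_less_le_trans by blast
  qed
  have "Y \<noteq> {}"
    using strictly_directed_finite[OF directed k_card_order k_infinite, of "{}"] by blast
  then have "supr Y \<in> limit_points Y"
    using supr_in_limit_points[OF _ bounded] below Y r_le_refl by blast
  moreover have "supr Y \<in> cof_k_points"
  proof -
    have "L \<subseteq> underS (supr Y)"
      using L(1) below unfolding underS_def by blast
    moreover have "k \<le>o |Z|" if "Z \<subseteq> underS (supr Y)" "unbounded_below (supr Y) Z" for Z
      using large_if_unbounded_below_supr[OF directed bounded _ that] below by blast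
    ultimately show ?thesis
      unfolding cof_k_points_def
      using supr_in_Field[OF bounded] L(2) unbounded_below_supr[OF bounded L(3)] by blast
  qed
  ultimately show ?thesis
    by blast
qed

lemma initial_segment_strictly_directed:
  assumes X: "X \<subseteq> Field r" "|X| =o r"
  shows "strictly_directed k {y\<in>X. |X \<inter> underS y| <o k}"
  unfolding strictly_directed_def
proof (intro allI impI)
  fix Z assume Z: "Z \<subseteq> {y\<in>X. |X \<inter> underS y| <o k}" "|Z| <o k"
  define W where "W = (\<Union>z\<in>Z. X \<inter> under z)"
  have "|W| <o k"
    unfolding W_def using Z(1)
    by (intro card_of_UNION_ordLess_infinite_Field_regularCard[OF k_regular k_Cinfinite Z(2)])
      (auto intro: card_of_under_ordLess[OF k_card_order k_infinite])
  then have W_small: "|W| <o r"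
    using k_less ordLess_transitive by blast
  have "\<not> X \<subseteq> W"
  proof
    assume "X \<subseteq> W"
    then have "|X| <o r"
      by (rule ordLeq_ordLess_trans[OF card_of_mono1 W_small])
    then show False
      using X(2) not_ordLess_ordIso by blast
  qed
  then have "X - W \<noteq> {}" "X - W \<subseteq> Field r"
    using X(1) by blast+
  define y where "y = minim (X - W)"
  have y: "y \<in> X - W" "\<And>x. x \<in> X - W \<Longrightarrow> y \<preceq> x"
    unfolding y_def using minim_in minim_least \<open>X - W \<subseteq> Field r\<close> \<open>X - W \<noteq> {}\<close> by blast+
  have "X \<inter> underS y \<subseteq> W"
    using y r_le_antisym unfolding underS_def by blast
  then have "|X \<inter> underS y| <o k"
    by (rule ordLeq_ordLess_trans[OF card_of_mono1 \<open>|W| <o k\<close>])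
  moreover have "z \<prec> y" if z: "z \<in> Z" for z
  proof (rule ccontr)
    assume "\<not> z \<prec> y"
    then have "y \<preceq> z"
      using r_not_le_less X(1) Z(1) y(1) z by blast
    then show False
      using y(1) z unfolding W_def under_def by blast
  qed
  ultimately show "\<exists>y\<in>{y\<in>X. |X \<inter> underS y| <o k}. \<forall>z\<in>Z. z \<prec> y"
    using y(1) by blast
qed

lemma exists_cofinal_subset_of_card_k:
  assumes Y: "Y \<subseteq> Field r" "k \<le>o |Y|" and short: "\<And>y. y \<in> Y \<Longrightarrow> |Y \<inter> under y| <o k"
  shows "\<exists>L\<subseteq>Y. |L| \<le>o k \<and> (\<forall>y\<in>Y. \<exists>l\<in>L. y \<preceq> l)"
proof -
  have "|Field k| \<le>o |Y|"
    by (rule ordIso_ordLeq_trans[OF card_of_Field_ordIso[OF k_card_order] Y(2)])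
  then obtain L where L: "L \<subseteq> Y" "|Field k| =o |L|"
    using internalize_card_of_ordLeq2 by blast
  have L_card: "|L| =o k"
    using ordIso_transitive[OF ordIso_symmetric[OF L(2)] card_of_Field_ordIso[OF k_card_order]] .
  have "\<exists>l\<in>L. y \<preceq> l" if y: "y \<in> Y" for y
  proof (rule ccontr)
    assume "\<not> ?thesis"
    then have "L \<subseteq> Y \<inter> under y"
      using L(1) y Y(1) r_not_le_less unfolding under_def by blast
    then have "|L| <o k"
      by (rule ordLeq_ordLess_trans[OF card_of_mono1 short[OF y]])
    then show False
      using L_card not_ordLess_ordIso by blast
  qed
  then show ?thesis
    using L(1) L_card ordIso_iff_ordLeq by blast
qed

lemma club_has_cof_k_limit_point:
  assumes "club r X"
  shows "\<exists>d\<in>cof_k_points. d \<in> limit_points X"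
proof -
  have X: "X \<subseteq> Field r" "|X| =o r"
    using assms card_of_club unfolding club_def by blast+
  define Y where "Y = {y\<in>X. |X \<inter> underS y| <o k}"
  have Y: "Y \<subseteq> Field r" "strictly_directed k Y"
    using X(1) initial_segment_strictly_directed[OF X] unfolding Y_def by blast+
  have "k \<le>o |Y|"
  proof (rule ccontr)
    assume "\<not> k \<le>o |Y|"
    then obtain y where "y \<in> Y" "y \<prec> y"
      using strictly_directedD[OF Y(2) subset_refl] not_ordLeq_k_imp_ordLess by blast
    then show False
      by blast
  qed
  moreover have "|Y \<inter> under y| <o k" if y: "y \<in> Y" for y
  proof -
    have "|X \<inter> under y| <o k"
      using y card_of_under_ordLess[OF k_card_order k_infinite, of X r y] unfolding Y_def by blast
    moreover have "Y \<inter> under y \<subseteq> X \<inter> under y"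
      unfolding Y_def by blast
    ultimately show ?thesis
      using ordLeq_ordLess_trans[OF card_of_mono1] by blast
  qed
  ultimately have "\<exists>L\<subseteq>Y. |L| \<le>o k \<and> (\<forall>y\<in>Y. \<exists>l\<in>L. y \<preceq> l)"
    by (rule exists_cofinal_subset_of_card_k[OF Y(1)])
  then obtain L where "L \<subseteq> Y" "|L| \<le>o k" "\<forall>y\<in>Y. \<exists>l\<in>L. y \<preceq> l"
    by blast
  then have "supr Y \<in> cof_k_points \<inter> limit_points Y"
    by (rule supr_in_cof_k_points[OF Y])
  moreover have "limit_points Y \<subseteq> limit_points X"
    by (rule limit_points_mono) (simp add: Y_def)
  ultimately show ?thesis
    by blast
qed

definition ladder :: "'a \<Rightarrow> 'a set" where
  "ladder d = (SOME L. L \<subseteq> underS d \<and> |L| \<le>o k \<and> unbounded_below d L)"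

lemma ladder:
  assumes "d \<in> cof_k_points"
  shows "ladder d \<subseteq> underS d" "|ladder d| \<le>o k" "unbounded_below d (ladder d)"
proof -
  have "\<exists>L. L \<subseteq> underS d \<and> |L| \<le>o k \<and> unbounded_below d L"
    using assms unfolding cof_k_points_def by blast
  from someI_ex[OF this] show "ladder d \<subseteq> underS d" "|ladder d| \<le>o k" "unbounded_below d (ladder d)"
    unfolding ladder_def by blast+
qed

lemma ladder_subset_Field: "d \<in> cof_k_points \<Longrightarrow> ladder d \<subseteq> Field r"
  using ladder(1) Order_Relation.underS_Field[of r d] by blast

text \<open>Empty segments are left out because \<open>supr {}\<close> is merely the least element of \<open>r\<close>.\<close>

definition guess :: "'a set \<Rightarrow> 'a \<Rightarrow> 'a set" where
  "guess E d = (\<lambda>a. supr (E \<inter> underS a)) ` {a \<in> ladder d. E \<inter> underS a \<noteq> {}}"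

lemma guess_subset_underS:
  assumes d: "d \<in> cof_k_points"
  shows "guess E d \<subseteq> underS d"
proof
  fix x assume "x \<in> guess E d"
  then obtain a where a: "a \<in> ladder d" "x = supr (E \<inter> underS a)"
    unfolding guess_def by blast
  have "a \<in> Field r" "a \<prec> d"
    using a(1) ladder(1)[OF d] unfolding underS_def by (blast intro: FieldI1)+
  then show "x \<in> underS d"
    using supr_least[OF Above_Int_underS] r_le_less_trans a(2) unfolding underS_def by blast
qed

lemma guess_unbounded_below:
  assumes d: "d \<in> cof_k_points" and limit: "d \<in> limit_points E"
  shows "unbounded_below d (guess E d)"
  unfolding unbounded_below_def
proof (intro allI impI)
  fix b assume "b \<prec> d"
  then obtain e where e: "e \<in> E" "b \<prec> e" "e \<prec> d"
    using limit unfolding limit_points_def by blast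
  then obtain a where a: "a \<in> ladder d" "e \<prec> a"
    using ladder(3)[OF d] unfolding unbounded_below_def by blast
  then have "a \<in> Field r"
    by (blast intro: FieldI2)
  then have "e \<preceq> supr (E \<inter> underS a)"
    using supr_upper a(2) e(1) Above_Int_underS unfolding underS_def by blast
  moreover have "supr (E \<inter> underS a) \<in> guess E d"
    unfolding guess_def using a e(1) unfolding underS_def by blast
  ultimately show "\<exists>z\<in>guess E d. b \<prec> z"
    using e(2) r_less_le_trans by blast
qed

lemma card_of_guess:
  assumes "d \<in> cof_k_points" and "d \<in> limit_points E"
  shows "k \<le>o |guess E d|"
  by (rule large_if_unbounded_below[OF assms(1) guess_subset_underS[OF assms(1)]
        guess_unbounded_below[OF assms]])

lemma guess_subset_club:
  assumes D: "club r D" and "E \<subseteq> D" and d: "d \<in> cof_k_points"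
  shows "guess E d \<subseteq> D"
proof
  fix x assume "x \<in> guess E d"
  then obtain a where a: "a \<in> ladder d" "E \<inter> underS a \<noteq> {}" "x = supr (E \<inter> underS a)"
    unfolding guess_def by blast
  have "Above (E \<inter> underS a) \<noteq> {}"
    using Above_Int_underS ladder_subset_Field[OF d] a(1) by blast
  moreover have "closed_in r D" "E \<inter> underS a \<subseteq> D"
    using D \<open>E \<subseteq> D\<close> unfolding club_def by blast+
  ultimately show "x \<in> D"
    using closed_supr_mem a(2,3) by blast
qed

lemma guess_cong:
  assumes "\<And>a. a \<in> ladder d \<Longrightarrow>
    (E \<inter> underS a = {} \<longleftrightarrow> E' \<inter> underS a = {}) \<and> supr (E \<inter> underS a) = supr (E' \<inter> underS a)"
  shows "guess E d = guess E' d"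
proof -
  have "{a \<in> ladder d. E \<inter> underS a \<noteq> {}} = {a \<in> ladder d. E' \<inter> underS a \<noteq> {}}"
    using assms by blast
  then show ?thesis
    unfolding guess_def using assms by (intro image_cong) auto
qed

lemma exists_decreasing_club_sequence:
  assumes N: "\<And>E. club r E \<Longrightarrow> club r (N E)"
  obtains Ec where "\<And>i. i \<in> Field r \<Longrightarrow> club r (Ec i)"
    and "\<And>i j. j \<prec> i \<Longrightarrow> Ec i \<subseteq> Ec j \<inter> N (Ec j)"
proof -
  define R where "R = r - Id"
  have wfR: "wf R"
    unfolding R_def by (rule WF)
  have underS_R: "j \<in> underS i \<longleftrightarrow> (j, i) \<in> R" for i j
    unfolding R_def underS_def by blast
  define Ec where "Ec = wfrec R (\<lambda>f i. Field r \<inter> \<Inter>((\<lambda>j. f j \<inter> N (f j)) ` underS i))"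
  have Ec_eq: "Ec i = Field r \<inter> \<Inter>((\<lambda>j. Ec j \<inter> N (Ec j)) ` underS i)" for i
  proof -
    have "(\<lambda>j. cut Ec R i j \<inter> N (cut Ec R i j)) ` underS i = (\<lambda>j. Ec j \<inter> N (Ec j)) ` underS i"
      by (intro image_cong) (simp_all add: underS_R cut_apply)
    then show ?thesis
      unfolding Ec_def by (subst wfrec[OF wfR]) simp
  qed
  have "club r (Ec i)" if "i \<in> Field r" for i
    using wfR that
  proof (induction i rule: wf_induct_rule)
    case (less i)
    have "club r (Ec j \<inter> N (Ec j))" if j: "j \<in> underS i" for j
    proof -
      have "j \<in> Field r"
        using j Order_Relation.underS_Field[of r i] by blast
      then have "club r (Ec j)"
        using less.IH j unfolding underS_R by blast
      then show ?thesis
        using N club_Int by blast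
    qed
    moreover have "|(\<lambda>j. Ec j \<inter> N (Ec j)) ` underS i| <o r"
      by (rule ordLeq_ordLess_trans[OF card_of_image card_of_underS[OF card_order less.prems]])
    ultimately show ?case
      using club_Inter Ec_eq by (metis (no_types, lifting) imageE)
  qed
  moreover have "Ec i \<subseteq> Ec j \<inter> N (Ec j)" if "j \<prec> i" for i j
    using Ec_eq[of i] that unfolding underS_def by blast
  ultimately show thesis
    using that by blast
qed

lemma underS_subset_if_unbounded:
  assumes "X \<subseteq> underS p" and "\<not> (\<exists>i\<in>underS p. \<forall>x\<in>X. x \<prec> i)"
  shows "underS p \<subseteq> X \<union> (\<Union>x\<in>X. underS x)"
proof
  fix i assume i: "i \<in> underS p"
  then obtain x where "x \<in> X" "\<not> x \<prec> i"
    using assms(2) by blast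
  then show "i \<in> X \<union> (\<Union>x\<in>X. underS x)"
    using r_not_le_less[of i x] i assms(1) Order_Relation.underS_Field[of r p]
    unfolding underS_def by blast
qed

lemma exists_segment_above_k: "\<exists>q\<in>Field r. k <o |underS q|"
proof -
  have "|Field (cardSuc k)| <o r"
    by (rule ordIso_ordLess_trans[OF card_of_Field_ordIso[OF cardSuc_Card_order[OF k_card_order]]
          cardSuc_k_less])
  then obtain q where q: "q \<in> Field r" "|Field (cardSuc k)| \<le>o |underS q|"
    using ordLess_imp_ordLeq_underS[OF card_order] by blast
  have "k <o |Field (cardSuc k)|"
    by (rule ordLess_ordIso_trans[OF cardSuc_greater[OF k_card_order]
          ordIso_symmetric[OF card_of_Field_ordIso[OF cardSuc_Card_order[OF k_card_order]]]])
  then have "k <o |underS q|"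
    by (rule ordLess_ordLeq_trans[OF _ q(2)])
  then show ?thesis
    using q(1) by blast
qed

text \<open>Fewer than \<open>k\<^sup>+\<close> points, each with at most \<open>k\<close> predecessors, cannot be cofinal in a
  segment with more than \<open>k\<close> points.\<close>

lemma segment_strictly_directed:
  assumes p: "k <o |underS p|" and small: "\<And>x. x \<in> underS p \<Longrightarrow> |underS x| \<le>o k"
  shows "strictly_directed (cardSuc k) (underS p)"
  unfolding strictly_directed_def
proof (intro allI impI)
  fix X assume X: "X \<subseteq> underS p" "|X| <o cardSuc k"
  show "\<exists>i\<in>underS p. \<forall>x\<in>X. x \<prec> i"
  proof (rule ccontr)
    assume "\<not> ?thesis"
    then have cover: "underS p \<subseteq> X \<union> (\<Union>x\<in>X. underS x)"
      by (rule underS_subset_if_unbounded[OF X(1)])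
    have X_le: "|X| \<le>o k"
      using X(2) cardSuc_ordLeq_ordLess[OF k_card_order card_of_Card_order] by blast
    have "\<forall>x\<in>X. |underS x| \<le>o k"
      using small X(1) by blast
    then have "|\<Union>x\<in>X. underS x| \<le>o k"
      by (rule UNION_Cinfinite_bound[OF X_le _ k_Cinfinite])
    then have "|X \<union> (\<Union>x\<in>X. underS x)| \<le>o k"
      by (rule Un_Cinfinite_bound[OF X_le _ k_Cinfinite])
    with cover have "|underS p| \<le>o k"
      by (rule ordLeq_transitive[OF card_of_mono1])
    then show False
      using p not_ordLess_ordLeq by blast
  qed
qed

lemma exists_strictly_directed_segment:
  "\<exists>I\<subseteq>Field r. |I| <o r \<and> strictly_directed (cardSuc k) I"
proof -
  define P where "P = {q \<in> Field r. k <o |underS q|}"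
  define p where "p = minim P"
  have "P \<subseteq> Field r" "P \<noteq> {}"
    using exists_segment_above_k unfolding P_def by blast+
  then have "p \<in> P"
    unfolding p_def by (rule minim_in)
  then have p: "p \<in> Field r" "k <o |underS p|"
    unfolding P_def by blast+
  have "|underS x| \<le>o k" if x: "x \<in> underS p" for x
  proof (rule ccontr)
    assume "\<not> |underS x| \<le>o k"
    then have "k <o |underS x|"
      using not_ordLeq_iff_ordLess[OF card_order_on_well_order_on[OF k_card_order] card_of_Well_order]
      by blast
    moreover have "x \<in> Field r"
      using x Order_Relation.underS_Field[of r p] by blast
    ultimately have "p \<preceq> x"
      unfolding p_def using minim_least[OF \<open>P \<subseteq> Field r\<close>] unfolding P_def by blast
    then show False
      using x r_le_antisym unfolding underS_def by blast
  qed
  then have "strictly_directed (cardSuc k) (underS p)"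
    by (rule segment_strictly_directed[OF p(2)])
  moreover have "underS p \<subseteq> Field r"
    by (rule Order_Relation.underS_Field)
  moreover have "|underS p| <o r"
    by (rule card_of_underS[OF card_order p(1)])
  ultimately show ?thesis
    by blast
qed

lemma supr_Int_underS_eventually_constant:
  assumes I: "I \<subseteq> Field r" "I \<noteq> {}" and a: "a \<in> Field r"
    and mono: "\<And>i j. i \<in> I \<Longrightarrow> j \<in> I \<Longrightarrow> i \<preceq> j \<Longrightarrow> Ec j \<subseteq> Ec i"
  shows "\<exists>i0\<in>I. \<forall>i\<in>I. i0 \<preceq> i \<longrightarrow>
    (Ec i \<inter> underS a = {} \<longleftrightarrow> Ec i0 \<inter> underS a = {}) \<and>
    supr (Ec i \<inter> underS a) = supr (Ec i0 \<inter> underS a)"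
proof (cases "\<exists>i0\<in>I. Ec i0 \<inter> underS a = {}")
  case True
  then obtain i0 where "i0 \<in> I" "Ec i0 \<inter> underS a = {}"
    by blast
  then have "Ec i \<inter> underS a = {}" if "i \<in> I" "i0 \<preceq> i" for i
    using mono[of i0 i] that by blast
  then show ?thesis
    using \<open>i0 \<in> I\<close> \<open>Ec i0 \<inter> underS a = {}\<close> by metis
next
  case False
  have bounded: "Above (Ec i \<inter> underS a) \<noteq> {}" for i
    using Above_Int_underS[OF a] by blast
  define V where "V = (\<lambda>i. supr (Ec i \<inter> underS a)) ` I"
  have "V \<subseteq> Field r" "V \<noteq> {}"
    unfolding V_def using supr_in_Field[OF bounded] I(2) by blast+
  then have "minim V \<in> V"
    by (rule minim_in)
  then obtain i0 where i0: "i0 \<in> I" "minim V = supr (Ec i0 \<inter> underS a)"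
    unfolding V_def by blast
  have "supr (Ec i \<inter> underS a) = supr (Ec i0 \<inter> underS a)" if i: "i \<in> I" "i0 \<preceq> i" for i
  proof (rule r_le_antisym)
    show "supr (Ec i \<inter> underS a) \<preceq> supr (Ec i0 \<inter> underS a)"
      by (rule supr_mono[OF bounded]) (use mono[OF i0(1) i] in blast)
    show "supr (Ec i0 \<inter> underS a) \<preceq> supr (Ec i \<inter> underS a)"
      unfolding i0(2)[symmetric] using minim_least \<open>V \<subseteq> Field r\<close> i(1) unfolding V_def by blast
  qed
  then show ?thesis
    using False i0(1) by blast
qed

lemma guess_eventually_constant:
  assumes I: "I \<subseteq> Field r" and directed: "strictly_directed (cardSuc k) I"
    and mono: "\<And>i j. i \<in> I \<Longrightarrow> j \<in> I \<Longrightarrow> i \<preceq> j \<Longrightarrow> Ec j \<subseteq> Ec i"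
    and d: "d \<in> cof_k_points"
  shows "\<exists>i0\<in>I. \<forall>i\<in>I. i0 \<preceq> i \<longrightarrow> guess (Ec i) d = guess (Ec i0) d"
proof -
  have "I \<noteq> {}"
    using strictly_directed_finite[OF directed cardSuc_Card_order[OF k_card_order]
        cardSuc_k_infinite, of "{}"] by blast
  then have "\<forall>a\<in>ladder d. \<exists>h\<in>I. \<forall>i\<in>I. h \<preceq> i \<longrightarrow>
      (Ec i \<inter> underS a = {} \<longleftrightarrow> Ec h \<inter> underS a = {}) \<and>
      supr (Ec i \<inter> underS a) = supr (Ec h \<inter> underS a)"
    using supr_Int_underS_eventually_constant[OF I] mono ladder_subset_Field[OF d] by blast
  then obtain h where h: "\<And>a. a \<in> ladder d \<Longrightarrow> h a \<in> I \<and> (\<forall>i\<in>I. h a \<preceq> i \<longrightarrow>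
      (Ec i \<inter> underS a = {} \<longleftrightarrow> Ec (h a) \<inter> underS a = {}) \<and>
      supr (Ec i \<inter> underS a) = supr (Ec (h a) \<inter> underS a))"
    by metis
  have "h ` ladder d \<subseteq> I"
    using h by blast
  moreover have "|h ` ladder d| <o cardSuc k"
    using ordLeq_transitive[OF card_of_image ladder(2)[OF d]]
      cardSuc_ordLeq_ordLess[OF k_card_order card_of_Card_order] by blast
  ultimately have "\<exists>i\<in>I. \<forall>x\<in>h ` ladder d. x \<prec> i"
    by (rule strictly_directedD[OF directed])
  then obtain i0 where i0: "i0 \<in> I" "\<And>a. a \<in> ladder d \<Longrightarrow> h a \<prec> i0"
    by blast
  have "guess (Ec i) d = guess (Ec i0) d" if "i \<in> I" "i0 \<preceq> i" for i
  proof (rule guess_cong)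
    fix a assume a: "a \<in> ladder d"
    then have "h a \<preceq> i0" "h a \<preceq> i"
      using i0(2) that(2) r_le_trans by blast+
    then show "(Ec i \<inter> underS a = {} \<longleftrightarrow> Ec i0 \<inter> underS a = {}) \<and>
        supr (Ec i \<inter> underS a) = supr (Ec i0 \<inter> underS a)"
      using h[OF a] that(1) i0(1) by metis
  qed
  then show ?thesis
    using i0(1) by blast
qed

text \<open>If no club \<open>E\<close> guessed every club, let \<open>N E\<close> be a club defeating \<open>E\<close>. Iterating \<open>N\<close>
  along a segment \<open>I\<close> of cofinality \<open>k\<^sup>+\<close> and intersecting gives a club with a limit point \<open>d\<close>
  of cofinality \<open>k\<close>; the guesses at \<open>d\<close> stabilise from some \<open>i\<^sub>1\<close> on, so the guess of \<open>Ec i\<^sub>1\<close>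
  equals that of \<open>Ec i\<^sub>2 \<subseteq> N (Ec i\<^sub>1)\<close> and lies in \<open>N (Ec i\<^sub>1)\<close>.\<close>

theorem club_guessing:
  "\<exists>E. club r E \<and> (\<forall>D. club r D \<longrightarrow> (\<exists>d\<in>cof_k_points. d \<in> limit_points E \<and> guess E d \<subseteq> D))"
proof (rule ccontr)
  assume "\<not> ?thesis"
  then have "\<forall>E. \<exists>D. club r E \<longrightarrow>
      club r D \<and> (\<forall>d\<in>cof_k_points. d \<in> limit_points E \<longrightarrow> \<not> guess E d \<subseteq> D)"
    by meson
  then obtain N where N: "\<And>E. club r E \<Longrightarrow>
      club r (N E) \<and> (\<forall>d\<in>cof_k_points. d \<in> limit_points E \<longrightarrow> \<not> guess E d \<subseteq> N E)"
    by metis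
  obtain Ec where Ec_club: "\<And>i. i \<in> Field r \<Longrightarrow> club r (Ec i)"
    and Ec_decr: "\<And>i j. j \<prec> i \<Longrightarrow> Ec i \<subseteq> Ec j \<inter> N (Ec j)"
    using exists_decreasing_club_sequence[of N] N by blast
  have mono: "Ec j \<subseteq> Ec i" if "i \<in> I" "j \<in> I" "i \<preceq> j" for I i j
    using Ec_decr[of i j] that(3) by (cases "i = j") auto
  obtain I where I: "I \<subseteq> Field r" "|I| <o r" "strictly_directed (cardSuc k) I"
    using exists_strictly_directed_segment by blast
  have "club r (Field r \<inter> \<Inter>(Ec ` I))"
    using club_Inter Ec_club I ordLeq_ordLess_trans[OF card_of_image I(2)] by blast
  then obtain d where d: "d \<in> cof_k_points" "d \<in> limit_points (Field r \<inter> \<Inter>(Ec ` I))"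
    using club_has_cof_k_limit_point by blast
  from guess_eventually_constant[OF I(1,3) mono d(1)]
  obtain i1 where i1: "i1 \<in> I" "\<forall>i\<in>I. i1 \<preceq> i \<longrightarrow> guess (Ec i) d = guess (Ec i1) d"
    by (rule bexE)
  obtain i2 where i2: "i2 \<in> I" "i1 \<prec> i2"
    using strictly_directed_finite[OF I(3) cardSuc_Card_order[OF k_card_order]
        cardSuc_k_infinite, of "{i1}"] i1(1) by blast
  have "guess (Ec i1) d \<subseteq> N (Ec i1)"
  proof -
    have "club r (N (Ec i1))"
      using N Ec_club I(1) i1(1) by blast
    moreover have "Ec i2 \<subseteq> N (Ec i1)"
      using Ec_decr[OF i2(2)] by blast
    ultimately have "guess (Ec i2) d \<subseteq> N (Ec i1)"
      by (rule guess_subset_club[OF _ _ d(1)])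
    then show ?thesis
      using i1(2) i2 by simp
  qed
  moreover have "d \<in> limit_points (Ec i1)"
    using d(2) limit_points_mono[of "Field r \<inter> \<Inter>(Ec ` I)" "Ec i1"] i1(1) by blast
  moreover have "i1 \<in> Field r"
    using I(1) i1(1) by blast
  ultimately show False
    using N[OF Ec_club] d(1) by blast
qed

corollary club_guessing_large_sets:
  "\<exists>G. \<forall>D. club r D \<longrightarrow> (\<exists>d\<in>Field r. G d \<subseteq> D \<and> k \<le>o |G d| )"
proof -
  obtain E where E: "\<And>D. club r D \<Longrightarrow> \<exists>d\<in>cof_k_points. d \<in> limit_points E \<and> guess E d \<subseteq> D"
    using club_guessing by blast
  have "\<exists>d\<in>Field r. guess E d \<subseteq> D \<and> k \<le>o |guess E d|" if "club r D" for D
    using E[OF that] card_of_guess unfolding cof_k_points_def by blast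
  then show ?thesis
    by blast
qed

theorem large_intersection:
  assumes lam: "Card_order lam" and cf: "cf_gt lam r"
    and clubs: "\<forall>D\<in>C. club r D" and C: "|C| =o lam"
  shows "\<exists>E. E \<subseteq> C \<and> |E| =o lam \<and> k \<le>o |\<Inter>E|"
proof (cases "finite (Field lam)")
  case True
  then have "finite C"
    using card_of_ordIso_finite_Field[OF lam ordIso_symmetric[OF C]] by blast
  then have "k \<le>o |\<Inter>C|"
    using ordLeq_transitive[OF ordLess_imp_ordLeq[OF k_less] card_of_Inter_finite_clubs] clubs by blast
  then show ?thesis
    using C by blast
next
  case False
  obtain G where G: "\<And>D. club r D \<Longrightarrow> \<exists>d\<in>Field r. G d \<subseteq> D \<and> k \<le>o |G d|"
    using club_guessing_large_sets by blast
  have "\<forall>D\<in>C. \<exists>d\<in>Field r. G d \<subseteq> D \<and> k \<le>o |G d|"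
    using G clubs by blast
  then obtain g where g: "\<And>D. D \<in> C \<Longrightarrow> g D \<in> Field r \<and> G (g D) \<subseteq> D \<and> k \<le>o |G (g D)|"
    by metis
  have "g ` C \<subseteq> Field r"
    using g by blast
  then obtain x where x: "x \<in> Field r" "|{D\<in>C. g D = x}| =o lam"
    using exists_large_fiber[OF lam False cf card_order infinite_Field C] by blast
  define E where "E = {D\<in>C. g D = x}"
  have "E \<noteq> {}"
    using x(2) False card_of_ordIso_finite_Field[OF lam ordIso_symmetric] unfolding E_def by fastforce
  then obtain D where "D \<in> E"
    by blast
  then have "k \<le>o |G x|"
    using g unfolding E_def by blast
  moreover have "G x \<subseteq> \<Inter>E"
    using g unfolding E_def by blast
  ultimately have "k \<le>o |\<Inter>E|"
    by (rule ordLeq_transitive[OF _ card_of_mono1])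
  moreover have "E \<subseteq> C"
    unfolding E_def by blast
  ultimately show ?thesis
    using x(2)[folded E_def] by blast
qed

end

subsection \<open>Large intersections below successor cardinals\<close>

lemma regular_uncountable_cardSuc:
  assumes m: "Cinfinite m" and r: "Card_order r" "r =o cardSuc m"
  shows "regular_uncountable r"
proof
  show "Card_order r"
    by (rule r(1))
  show "regularCard r"
    by (rule regularCard_ordIso[OF ordIso_symmetric[OF r(2)] Cinfinite_cardSuc[OF m] regularCard_cardSuc[OF m]])
  have "|UNIV :: nat set| \<le>o m"
    using infinite_iff_card_of_nat m card_of_Field_ordIso ordLeq_ordIso_trans
    unfolding cinfinite_def by blast
  then have "|UNIV :: nat set| <o cardSuc m"
    by (rule ordLeq_ordLess_trans[OF _ cardSuc_greater[OF conjunct2[OF m]]])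
  then show "|UNIV :: nat set| <o r"
    by (rule ordLess_ordIso_trans[OF _ ordIso_symmetric[OF r(2)]])
qed

corollary large_intersection_cardSuc:
  assumes m: "Cinfinite m" and r: "Card_order r" "r =o cardSuc m"
    and k: "Cinfinite k" "regularCard k" "k <o m"
    and "Card_order lam" and "cf_gt lam r" and "\<forall>D\<in>C. club r D" and "|C| =o lam"
  shows "\<exists>E. E \<subseteq> C \<and> |E| =o lam \<and> k \<le>o |\<Inter>E|"
proof -
  have "cardSuc k \<le>o m"
    using cardSuc_least k m by blast
  moreover have "m <o r"
    by (rule ordLess_ordIso_trans[OF cardSuc_greater[OF conjunct2[OF m]] ordIso_symmetric[OF r(2)]])
  ultimately have "cardSuc k <o r"
    by (rule ordLeq_ordLess_trans)
  moreover have "regular_uncountable r"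
    by (rule regular_uncountable_cardSuc[OF m r])
  ultimately interpret club_guessing_setup r k
    using k unfolding cinfinite_def by (intro club_guessing_setup.intro club_guessing_setup_axioms.intro) auto
  show ?thesis
    using large_intersection assms by blast
qed

definition infinite_cardSuc :: "'t rel \<Rightarrow> ('t + nat) set rel" where
  "infinite_cardSuc theta = cardSuc |Field theta <+> (UNIV :: nat set)|"

lemma Cinfinite_infinite_cardSuc: "Cinfinite (infinite_cardSuc theta)"
  unfolding infinite_cardSuc_def
  by (rule Cinfinite_cardSuc) (simp add: cinfinite_def Field_card_of card_of_card_order_on)

lemma regularCard_infinite_cardSuc: "regularCard (infinite_cardSuc theta)"
  unfolding infinite_cardSuc_def
  by (rule regularCard_cardSuc) (simp add: cinfinite_def Field_card_of card_of_card_order_on)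

lemma ordLeq_infinite_cardSuc:
  assumes "Card_order theta"
  shows "theta \<le>o infinite_cardSuc theta"
proof -
  have "theta \<le>o |Field theta <+> (UNIV :: nat set)|"
    by (rule ordIso_ordLeq_trans[OF ordIso_symmetric[OF card_of_Field_ordIso[OF assms]] card_of_Plus1])
  also have "|Field theta <+> (UNIV :: nat set)| \<le>o infinite_cardSuc theta"
    unfolding infinite_cardSuc_def by (rule ordLess_imp_ordLeq[OF cardSuc_greater[OF card_of_Card_order]])
  finally show ?thesis .
qed

lemma card_of_Plus_nat_ordLess:
  assumes mu: "Cinfinite mu" and theta: "Card_order theta" "theta <o mu"
    and nat: "|UNIV :: nat set| <o mu"
  shows "|Field theta <+> (UNIV :: nat set)| <o mu"
  using card_of_Plus_ordLess_infinite_Field[OF _ _ ordIso_ordLess_trans[OF card_of_Field_ordIso[OF theta(1)] theta(2)] nat]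
    mu unfolding cinfinite_def by blast

lemma infinite_cardSuc_ordLess_singular:
  assumes mu: "singular_cardinal mu" and theta: "Card_order theta" "theta <o mu"
  shows "infinite_cardSuc theta <o mu"
proof -
  have mu_inf: "Cinfinite mu" and "\<not> regularCard mu"
    using mu unfolding singular_cardinal_def by blast+
  have "|UNIV :: nat set| \<le>o mu"
    using infinite_iff_card_of_nat mu_inf card_of_Field_ordIso ordLeq_ordIso_trans
    unfolding cinfinite_def by blast
  moreover have "\<not> |UNIV :: nat set| =o mu"
  proof
    assume "|UNIV :: nat set| =o mu"
    then have "natLeq =o mu"
      by (rule ordIso_transitive[OF ordIso_symmetric[OF card_of_nat]])
    then have "regularCard mu"
      by (rule regularCard_ordIso[OF _ natLeq_Cinfinite regularCard_natLeq])
    then show False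
      using \<open>\<not> regularCard mu\<close> by blast
  qed
  ultimately have "|UNIV :: nat set| <o mu"
    using ordLeq_iff_ordLess_or_ordIso by blast
  then have "|Field theta <+> (UNIV :: nat set)| <o mu"
    by (rule card_of_Plus_nat_ordLess[OF mu_inf theta])
  then have "infinite_cardSuc theta \<le>o mu"
    unfolding infinite_cardSuc_def
    using cardSuc_least mu_inf card_of_Card_order by blast
  moreover have "\<not> infinite_cardSuc theta =o mu"
    using regularCard_ordIso[OF _ Cinfinite_infinite_cardSuc regularCard_infinite_cardSuc]
      \<open>\<not> regularCard mu\<close> by blast
  ultimately show ?thesis
    using ordLeq_iff_ordLess_or_ordIso by blast
qed

lemma infinite_cardSuc_ordLess_weakly_inaccessible:
  fixes kappa :: "'k rel" and theta :: "'t rel"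
  assumes kappa: "weakly_inaccessible kappa" and theta: "Card_order theta" "theta <o kappa"
  shows "infinite_cardSuc theta <o kappa"
proof -
  have kappa_inf: "Cinfinite kappa" and "|UNIV :: nat set| <o kappa"
    and limit: "\<And>nu :: 'k rel. Card_order nu \<Longrightarrow> nu <o kappa \<Longrightarrow> cardSuc nu <o kappa"
    using kappa unfolding weakly_inaccessible_def regular_cardinal_def by blast+
  then have "|Field theta <+> (UNIV :: nat set)| <o kappa"
    using card_of_Plus_nat_ordLess[OF kappa_inf theta] by blast
  from internalize_card_of_ordLess[THEN iffD1, OF this]
  obtain B :: "'k set" where B: "|Field theta <+> (UNIV :: nat set)| =o |B|" "|B| <o kappa"
    by blast
  have "cardSuc |B| <o kappa"
    using limit[OF card_of_Card_order B(2)] .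
  moreover have "infinite_cardSuc theta =o cardSuc |B|"
    unfolding infinite_cardSuc_def
    by (rule cardSuc_invar_ordIso[OF card_of_Card_order card_of_Card_order, THEN iffD2, OF B(1)])
  ultimately show ?thesis
    by (rule ordIso_ordLess_trans[rotated])
qed

corollary large_intersection_above:
  assumes m: "Cinfinite m" and r: "Card_order r" "r =o cardSuc m"
    and theta: "Card_order theta" "infinite_cardSuc theta <o m"
    and lam: "Card_order lam" "cf_gt lam r" and clubs: "\<forall>D\<in>C. club r D" and C: "|C| =o lam"
  shows "\<exists>E. E \<subseteq> C \<and> |E| =o lam \<and> theta \<le>o |\<Inter>E|"
proof -
  have "\<exists>E. E \<subseteq> C \<and> |E| =o lam \<and> infinite_cardSuc theta \<le>o |\<Inter>E|"
    by (rule large_intersection_cardSuc[OF m r Cinfinite_infinite_cardSuc regularCard_infinite_cardSuc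
          theta(2) lam clubs C])
  then obtain E where E: "E \<subseteq> C" "|E| =o lam" "infinite_cardSuc theta \<le>o |\<Inter>E|"
    by blast
  have "theta \<le>o |\<Inter>E|"
    by (rule ordLeq_transitive[OF ordLeq_infinite_cardSuc[OF theta(1)] E(3)])
  then show ?thesis
    using E(1,2) by blast
qed

theorem proposition4p2:
  shows
   \<comment> \<open>(aleph): r is (isomorphic to) kappa^{++}\<close>
   "(\<forall>(kappa :: 'k rel) (r :: 'a rel) (lam :: 'l rel) (C :: 'a set set).
       regular_cardinal kappa \<and> Card_order r \<and> r =o cardSuc (cardSuc kappa) \<and>
       Card_order lam \<and> cf_gt lam r \<and>
       (\<forall>D \<in> C. club r D) \<and> (card_of (C)) =o lam
       \<longrightarrow> (\<exists>E. E \<subseteq> C \<and> (card_of (E)) =o lam \<and> kappa \<le>o (card_of (\<Inter>E))))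
    \<and>
   \<comment> \<open>(beth): r is (isomorphic to) mu^+, mu singular\<close>
    (\<forall>(mu :: 'm rel) (r :: 'b rel) (lam :: 'l rel) (C :: 'b set set).
       singular_cardinal mu \<and> Card_order r \<and> r =o cardSuc mu \<and>
       Card_order lam \<and> cf_gt lam r \<and>
       (\<forall>D \<in> C. club r D) \<and> Gal_fail_witness (club_filter r) r lam C
       \<longrightarrow> (\<forall>theta :: 't rel. Card_order theta \<and> theta <o mu \<longrightarrow>
              (\<exists>E. E \<subseteq> C \<and> (card_of (E)) =o lam \<and> theta \<le>o (card_of (\<Inter>E)))))
    \<and>
   \<comment> \<open>(gimel): r is (isomorphic to) kappa^+, kappa weakly inaccessible\<close>
    (\<forall>(kappa :: 'k rel) (r :: 'c rel) (lam :: 'l rel) (C :: 'c set set).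
       weakly_inaccessible kappa \<and> Card_order r \<and> r =o cardSuc kappa \<and>
       Card_order lam \<and> cf_gt lam r \<and>
       (\<forall>D \<in> C. club r D) \<and> Gal_fail_witness (club_filter r) r lam C
       \<longrightarrow> (\<forall>theta :: 't rel. Card_order theta \<and> theta <o kappa \<longrightarrow>
              (\<exists>E. E \<subseteq> C \<and> (card_of (E)) =o lam \<and> theta \<le>o (card_of (\<Inter>E)))))"
proof (intro conjI allI impI)
  fix kappa :: "'k rel" and r :: "'a rel" and lam :: "'l rel" and C :: "'a set set"
  assume h: "regular_cardinal kappa \<and> Card_order r \<and> r =o cardSuc (cardSuc kappa) \<and>
    Card_order lam \<and> cf_gt lam r \<and> (\<forall>D \<in> C. club r D) \<and> |C| =o lam"
  then have kappa: "Cinfinite kappa" "regularCard kappa"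
    unfolding regular_cardinal_def by blast+
  show "\<exists>E. E \<subseteq> C \<and> |E| =o lam \<and> kappa \<le>o |\<Inter>E|"
    by (rule large_intersection_cardSuc[where r = r, OF Cinfinite_cardSuc[OF kappa(1)] _ _ kappa
        cardSuc_greater[OF conjunct2[OF kappa(1)]]]) (use h in simp_all)
next
  fix mu :: "'m rel" and r :: "'b rel" and lam :: "'l rel" and C :: "'b set set" and theta :: "'t rel"
  assume h: "singular_cardinal mu \<and> Card_order r \<and> r =o cardSuc mu \<and> Card_order lam \<and> cf_gt lam r \<and>
    (\<forall>D \<in> C. club r D) \<and> Gal_fail_witness (club_filter r) r lam C"
    and theta: "Card_order theta \<and> theta <o mu"
  then have mu: "Cinfinite mu"
    unfolding singular_cardinal_def by blast
  show "\<exists>E. E \<subseteq> C \<and> |E| =o lam \<and> theta \<le>o |\<Inter>E|"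
    by (rule large_intersection_above[where r = r, OF mu _ _ _ infinite_cardSuc_ordLess_singular])
      (use h theta in \<open>simp_all add: Gal_fail_witness_def\<close>)
next
  fix kappa :: "'k rel" and r :: "'c rel" and lam :: "'l rel" and C :: "'c set set" and theta :: "'t rel"
  assume h: "weakly_inaccessible kappa \<and> Card_order r \<and> r =o cardSuc kappa \<and> Card_order lam \<and>
    cf_gt lam r \<and> (\<forall>D \<in> C. club r D) \<and> Gal_fail_witness (club_filter r) r lam C"
    and theta: "Card_order theta \<and> theta <o kappa"
  then have kappa: "Cinfinite kappa"
    unfolding weakly_inaccessible_def regular_cardinal_def by blast
  show "\<exists>E. E \<subseteq> C \<and> |E| =o lam \<and> theta \<le>o |\<Inter>E|"
    by (rule large_intersection_above[where r = r, OF kappa _ _ _ infinite_cardSuc_ordLess_weakly_inaccessible])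
      (use h theta in \<open>simp_all add: Gal_fail_witness_def\<close>)
qed

end
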